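(* Let $n\ge 5$. If $x\in\mathrm{Sort}_n(123,321)$, then $s_{123,321}(x)=s_{123,321}(\mathrm{swap}(x))$.
   Context: For a permutation $x$ of length at least two, $\mathrm{swap}(x)$ is the permutation obtained from $x$ by interchanging the entries $1$ and $2$. A permutation contains a pattern $p$ if it has a subsequence order-isomorphic to $p$; otherwise it avoids $p$. For a set $T$ of patterns, the map $s_T$ is defined as follows: the entries of the input permutation are read from left to right, with an initially empty stack. At each step, if the input is nonempty and pushing the next input entry onto the stack produces a stack whose contents, read from top to bottom, avoid every pattern in $T$, that entry is pushed; otherwise the top entry of the stack is popped and appended to the output. When the input is exhausted, the remaining stack entries are popped one at a time to the output. Write $s_{\sigma,\tau}=s_{\{\sigma,\tau\}}$ and $s=s_{\{21\}}$ (West's stack-sorting map). $\mathrm{Sort}_n(\sigma,\tau)$ is the set of $x\in S_n$ with $s(s_{\sigma,\tau}(x))=12\cdots n$. *)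

theory Defs
  imports Main "HOL-Library.Sublist"
begin

definition perms :: "nat \<Rightarrow> nat list set" where
  "perms n = {xs. distinct xs \<and> set xs = {1..n}}"

definition order_iso :: "nat list \<Rightarrow> nat list \<Rightarrow> bool" where
  "order_iso ys p \<longleftrightarrow> length ys = length p \<and>
     (\<forall>i<length p. \<forall>j<length p. ys ! i < ys ! j \<longleftrightarrow> p ! i < p ! j)"

definition contains :: "nat list \<Rightarrow> nat list \<Rightarrow> bool" where
  "contains xs p \<longleftrightarrow> (\<exists>ys. subseq ys xs \<and> order_iso ys p)"

definition avoids :: "nat list \<Rightarrow> nat list \<Rightarrow> bool" where
  "avoids xs p \<longleftrightarrow> \<not> contains xs p"

text \<open>Stack machine. The stack is a list whose head is the top, so the list itself
  is the stack contents read from top to bottom. Arguments: pattern set, remaining input,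
  stack, output so far.\<close>
function stsort :: "nat list set \<Rightarrow> nat list \<Rightarrow> nat list \<Rightarrow> nat list \<Rightarrow> nat list" where
  "stsort T [] st out = out @ st"
| "stsort T (x # xs) [] out = stsort T xs [x] out"
| "stsort T (x # xs) (y # st) out =
     (if (\<forall>p\<in>T. avoids (x # y # st) p) then stsort T xs (x # y # st) out
      else stsort T (x # xs) st (out @ [y]))"
  by pat_completeness auto
termination
  by (relation "measure (\<lambda>(T, xs, st, out). 2 * length xs + length st)") auto

definition stack_sort_T :: "nat list set \<Rightarrow> nat list \<Rightarrow> nat list" where
  "stack_sort_T T x = stsort T x [] []"

definition s_123_321 :: "nat list \<Rightarrow> nat list" where
  "s_123_321 = stack_sort_T {[1,2,3], [3,2,1]}"

definition west_s :: "nat list \<Rightarrow> nat list" where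
  "west_s = stack_sort_T {[2,1]}"

definition swap12 :: "nat list \<Rightarrow> nat list" where
  "swap12 x = map (\<lambda>v. if v = 1 then 2 else if v = 2 then 1 else v) x"

definition Sort_123_321 :: "nat \<Rightarrow> nat list set" where
  "Sort_123_321 n = {x \<in> perms n. west_s (s_123_321 x) = [1..<n+1]}"

end

theory Submission
  imports Defs
begin

text \<open>
  The stack machine is run as a fold of single-entry steps on a state (stack, output), and a
  state is \<^emph>\<open>flushed\<close> by appending its stack to its output. Flushed states only grow by
  insertions, so the flushed state after any prefix of \<open>x\<close> is a subsequence of
  \<open>s_123_321 x\<close>. West's map sorts only 231-avoiding permutations, so for \<open>x\<close> in
  \<open>Sort_123_321 n\<close> no flushed state of the run contains 231. Following the entries before
  \<open>n\<close>, this forces \<open>x\<close> to begin with \<open>n\<close>, with \<open>n - 1, n\<close>, or with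
  \<open>n - 1, n - 2, n\<close>. After such a prefix the bottom of the stack holds entries larger than
  all later ones and never moves, and above it the machine behaves like \<open>s_12_321\<close>, whose
  stack is decreasing of height at most two; so \<open>s_123_321 x = u @ s_12_321 w @ v\<close> for the
  remaining entries \<open>w\<close>. Finally \<open>s_12_321 w\<close> does not see the swap of 1 and 2 as long as it
  avoids 231: then the maximum of \<open>w\<close> is among its first two entries (a later maximum is
  pushed onto the minimum of the earlier entries after a larger one has been output), it is
  output first, and induction removes it.
\<close>

section \<open>Patterns of length at most three\<close>

lemma order_iso_length2:
  "order_iso ys [a, b] \<longleftrightarrow> (\<exists>p q. ys = [p, q] \<and> (p < q \<longleftrightarrow> a < b) \<and> (q < p \<longleftrightarrow> b < a))"
    (is "_ \<longleftrightarrow> (\<exists>p q. ys = [p, q] \<and> ?cmp p q)")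
proof -
  have iso: "order_iso [p, q] [a, b] \<longleftrightarrow> ?cmp p q" for p q
    unfolding order_iso_def by (simp add: less_Suc_eq numeral_2_eq_2 nth_Cons') fastforce
  show ?thesis
  proof
    assume h: "order_iso ys [a, b]"
    then obtain p q where ys: "ys = [p, q]"
      by (auto simp: order_iso_def numeral_2_eq_2 length_Suc_conv)
    with h iso have "?cmp p q" by simp
    with ys show "\<exists>p q. ys = [p, q] \<and> ?cmp p q" by (intro exI) (rule conjI)
  next
    assume "\<exists>p q. ys = [p, q] \<and> ?cmp p q"
    then obtain p q where "ys = [p, q]" "?cmp p q" by metis
    with iso show "order_iso ys [a, b]" by simp
  qed
qed

lemma order_iso_length3:
  "order_iso ys [a, b, c] \<longleftrightarrow> (\<exists>p q r. ys = [p, q, r] \<and>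
     (p < q \<longleftrightarrow> a < b) \<and> (q < p \<longleftrightarrow> b < a) \<and> (q < r \<longleftrightarrow> b < c) \<and>
     (r < q \<longleftrightarrow> c < b) \<and> (p < r \<longleftrightarrow> a < c) \<and> (r < p \<longleftrightarrow> c < a))"
    (is "_ \<longleftrightarrow> (\<exists>p q r. ys = [p, q, r] \<and> ?cmp p q r)")
proof -
  have iso: "order_iso [p, q, r] [a, b, c] \<longleftrightarrow> ?cmp p q r" for p q r
    unfolding order_iso_def by (simp add: less_Suc_eq numeral_3_eq_3 nth_Cons') fastforce
  show ?thesis
  proof
    assume h: "order_iso ys [a, b, c]"
    then obtain p q r where ys: "ys = [p, q, r]"
      by (auto simp: order_iso_def numeral_3_eq_3 length_Suc_conv)
    with h iso have "?cmp p q r" by simp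
    with ys show "\<exists>p q r. ys = [p, q, r] \<and> ?cmp p q r" by (intro exI) (rule conjI)
  next
    assume "\<exists>p q r. ys = [p, q, r] \<and> ?cmp p q r"
    then obtain p q r where "ys = [p, q, r]" "?cmp p q r" by metis
    with iso show "order_iso ys [a, b, c]" by simp
  qed
qed

lemma contains_21_iff: "contains l [2, 1] \<longleftrightarrow> (\<exists>p q. subseq [p, q] l \<and> q < p)"
  by (auto simp: contains_def order_iso_length2)

lemma contains_12_iff: "contains l [1, 2] \<longleftrightarrow> (\<exists>p q. subseq [p, q] l \<and> p < q)"
  by (auto simp: contains_def order_iso_length2)

lemma contains_123_iff: "contains l [1, 2, 3] \<longleftrightarrow> (\<exists>p q r. subseq [p, q, r] l \<and> p < q \<and> q < r)"
  by (auto simp: contains_def order_iso_length3)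

lemma contains_321_iff: "contains l [3, 2, 1] \<longleftrightarrow> (\<exists>p q r. subseq [p, q, r] l \<and> r < q \<and> q < p)"
  by (auto simp: contains_def order_iso_length3)

lemma contains_231_iff: "contains l [2, 3, 1] \<longleftrightarrow> (\<exists>p q r. subseq [p, q, r] l \<and> r < p \<and> p < q)"
  by (auto simp: contains_def order_iso_length3)

lemma contains_subseq: "contains l p \<Longrightarrow> subseq l l' \<Longrightarrow> contains l' p"
  unfolding contains_def using subseq_order.order_trans by blast

lemma contains_231I: "subseq [p, q, r] l \<Longrightarrow> r < p \<Longrightarrow> p < q \<Longrightarrow> contains l [2, 3, 1]"
  unfolding contains_231_iff by blast

lemma subseq2_Cons: "subseq [q, r] (x # l) \<longleftrightarrow> subseq [q, r] l \<or> (q = x \<and> r \<in> set l)"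
  by (auto dest: subseq_Cons' simp: subseq_singleton_left)

lemma subseq3_Cons:
  "subseq [p, q, r] (x # l) \<longleftrightarrow> subseq [p, q, r] l \<or> (p = x \<and> subseq [q, r] l)"
  by (auto dest: subseq_Cons')

lemma subseq3_split:
  assumes "subseq [p, q, r] y"
  obtains y1 y2 y3 where "y = y1 @ p # y2 @ q # y3" "r \<in> set y3"
proof -
  obtain y1 y' where "y = y1 @ p # y'" "subseq [q, r] y'"
    using list_emb_ConsD[OF assms] by blast
  moreover obtain y2 y3 where "y' = y2 @ q # y3" "subseq [r] y3"
    using list_emb_ConsD[OF \<open>subseq [q, r] y'\<close>] by blast
  ultimately show ?thesis using that by (simp add: subseq_singleton_left)
qed

lemma subseq3_appendI: "subseq [p, q, r] (A @ p # B @ q # C @ r # D)"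
  by (simp add: subseq_drop_many subseq_singleton_left)

section \<open>Stack-sorting maps as folds\<close>

fun feed :: "(nat list \<Rightarrow> bool) \<Rightarrow> nat \<Rightarrow> nat list \<times> nat list \<Rightarrow> nat list \<times> nat list" where
  "feed P c ([], out) = ([c], out)"
| "feed P c (y # st, out) = (if P (c # y # st) then (c # y # st, out) else feed P c (st, out @ [y]))"

definition flush :: "nat list \<times> nat list \<Rightarrow> nat list" where
  "flush S = snd S @ fst S"

definition admissible :: "nat list set \<Rightarrow> nat list \<Rightarrow> bool" where
  "admissible T l \<longleftrightarrow> (\<forall>p\<in>T. avoids l p)"

lemma stsort_eq_fold: "stsort T xs st out = flush (fold (feed (admissible T)) xs (st, out))"
  by (induction T xs st out rule: stsort.induct) (simp_all add: flush_def admissible_def)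

lemma stack_sort_T_eq_fold: "stack_sort_T T x = flush (fold (feed (admissible T)) x ([], []))"
  by (simp add: stack_sort_T_def stsort_eq_fold)

lemma feed_pop_push: "\<exists>s1 s2. st = s1 @ s2 \<and> feed P c (st, out) = (c # s2, out @ s1)"
proof (induction st arbitrary: out)
  case (Cons y st)
  show ?case
  proof (cases "P (c # y # st)")
    case True
    then show ?thesis by (intro exI[of _ "[]"] exI[of _ "y # st"]) simp
  next
    case False
    obtain s1 s2 where "st = s1 @ s2" "feed P c (st, out @ [y]) = (c # s2, (out @ [y]) @ s1)"
      using Cons.IH by blast
    with False show ?thesis by (intro exI[of _ "y # s1"] exI[of _ s2]) simp
  qed
qed simp

lemma feed_top: "\<exists>s. fst (feed P c S) = c # s"
  using feed_pop_push[of "fst S" P c "snd S"] by auto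

lemma set_fst_feed: "set (fst (feed P c (t, out))) \<subseteq> insert c (set t)"
  using feed_pop_push[of t P c out] by auto

lemma feed_append_cases:
  "feed P c (t @ B, out) = feed P c (B, out @ t) \<or>
   (\<exists>t1 t2. t = t1 @ t2 \<and> t2 \<noteq> [] \<and> P (c # t2 @ B) \<and> feed P c (t @ B, out) = (c # t2 @ B, out @ t1))"
proof (induction t arbitrary: out)
  case (Cons y t)
  show ?case
  proof (cases "P (c # y # t @ B)")
    case True
    then show ?thesis by (intro disjI2 exI[of _ "[]"] exI[of _ "y # t"]) simp
  next
    case False
    then have step: "feed P c ((y # t) @ B, out) = feed P c (t @ B, out @ [y])" by simp
    from Cons.IH[of "out @ [y]"] show ?thesis
    proof
      assume "feed P c (t @ B, out @ [y]) = feed P c (B, (out @ [y]) @ t)"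
      with step show ?thesis by simp
    next
      assume "\<exists>t1 t2. t = t1 @ t2 \<and> t2 \<noteq> [] \<and> P (c # t2 @ B) \<and>
        feed P c (t @ B, out @ [y]) = (c # t2 @ B, (out @ [y]) @ t1)"
      then obtain t1 t2 where "t = t1 @ t2" "t2 \<noteq> []" "P (c # t2 @ B)"
        "feed P c (t @ B, out @ [y]) = (c # t2 @ B, (out @ [y]) @ t1)" by blast
      with step show ?thesis by (intro disjI2 exI[of _ "y # t1"] exI[of _ t2]) simp
    qed
  qed
qed simp

lemma feed_admissible: "fst (feed P c S) = [c] \<or> P (fst (feed P c S))"
  by (induction P c S rule: feed.induct) auto

lemma feed_prepend_out: "feed P c (st, p @ out) = apsnd ((@) p) (feed P c (st, out))"
  by (induction P c "(st, out)" arbitrary: st out rule: feed.induct) auto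

lemma fold_feed_prepend_out:
  "fold (feed P) xs (st, p @ out) = apsnd ((@) p) (fold (feed P) xs (st, out))"
proof (induction xs arbitrary: st out)
  case (Cons x xs)
  then show ?case by (simp add: feed_prepend_out prod.case_eq_if apsnd_def map_prod_def)
qed simp

lemma fold_feed_out_extends: "\<exists>r. snd (fold (feed P) xs S) = snd S @ r"
proof (induction xs arbitrary: S)
  case (Cons x xs)
  obtain st out where "S = (st, out)" by fastforce
  with feed_pop_push[of st P x out] Cons.IH[of "feed P x S"] show ?case by auto
qed simp

lemma flush_feed: "\<exists>v1 v2. flush S = v1 @ v2 \<and> flush (feed P c S) = v1 @ c # v2"
proof -
  obtain st out where S: "S = (st, out)" by fastforce
  obtain s1 s2 where "st = s1 @ s2" "feed P c (st, out) = (c # s2, out @ s1)" using feed_pop_push by blast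
  then show ?thesis unfolding S flush_def by (intro exI[of _ "out @ s1"] exI[of _ s2]) simp
qed

lemma subseq_flush_fold: "subseq (flush S) (flush (fold (feed P) xs S))"
proof (induction xs arbitrary: S)
  case (Cons x xs)
  obtain v1 v2 where "flush S = v1 @ v2" "flush (feed P x S) = v1 @ x # v2" using flush_feed by blast
  then have "subseq (flush S) (flush (feed P x S))"
    by (simp add: subseq_append' subseq_drop_many[of v2 v2 "[x]", simplified])
  with Cons.IH[of "feed P x S"] show ?case by (simp add: subseq_order.order_trans)
qed simp

lemma set_flush_fold: "set (flush (fold (feed P) xs S)) = set xs \<union> set (flush S)"
proof (induction xs arbitrary: S)
  case (Cons x xs)
  obtain v1 v2 where "flush S = v1 @ v2" "flush (feed P x S) = v1 @ x # v2" using flush_feed by blast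
  with Cons.IH[of "feed P x S"] show ?case by auto
qed simp

lemma distinct_flush_fold:
  "distinct (flush S) \<Longrightarrow> distinct xs \<Longrightarrow> set xs \<inter> set (flush S) = {} \<Longrightarrow>
   distinct (flush (fold (feed P) xs S))"
proof (induction xs arbitrary: S)
  case (Cons x xs)
  obtain v1 v2 where v: "flush S = v1 @ v2" "flush (feed P x S) = v1 @ x # v2" using flush_feed by blast
  have "x \<notin> set (flush S)" using Cons.prems(3) by simp
  with v Cons.prems(1) have "distinct (flush (feed P x S))" by simp
  moreover have "set xs \<inter> set (flush (feed P x S)) = {}" using v Cons.prems(2,3) by auto
  ultimately show ?case using Cons.IH Cons.prems(2) by simp
qed simp

lemma feed_keeps_bottom:
  assumes "B \<noteq> []" "P (c # B)"
  shows "\<exists>t' r. feed P c (t @ B, out) = (c # t' @ B, out @ r)"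
  using feed_append_cases[of P c t B out]
proof
  assume "feed P c (t @ B, out) = feed P c (B, out @ t)"
  moreover obtain b B' where "B = b # B'" using assms(1) by (cases B) auto
  ultimately show ?thesis using assms(2) by (intro exI[of _ "[]"] exI[of _ t]) simp
qed blast

lemma fold_keeps_bottom:
  assumes "B \<noteq> []" "\<forall>c\<in>set xs. P (c # B)"
  shows "\<exists>t' r. fold (feed P) xs (t @ B, out) = (t' @ B, out @ r)"
  using assms(2)
proof (induction xs arbitrary: t out)
  case (Cons c xs)
  from Cons.prems have "P (c # B)" "\<forall>c\<in>set xs. P (c # B)" by simp_all
  obtain t1 r1 where "feed P c (t @ B, out) = (c # t1 @ B, out @ r1)"
    using feed_keeps_bottom[of B P c t out] assms(1) \<open>P (c # B)\<close> by blast
  moreover obtain t2 r2 where "fold (feed P) xs ((c # t1) @ B, out @ r1) = (t2 @ B, (out @ r1) @ r2)"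
    using Cons.IH[OF \<open>\<forall>c\<in>set xs. P (c # B)\<close>] by blast
  ultimately show ?case by (intro exI[of _ t2] exI[of _ "r1 @ r2"]) simp
qed simp

lemma feed_min_bottom:
  assumes "c \<noteq> y"
    and above: "\<And>t2. P (c # t2 @ y # B) \<Longrightarrow> y < c"
    and push: "y < c \<Longrightarrow> P (c # y # B)"
    and bottom: "B \<noteq> [] \<Longrightarrow> P (c # B)"
  shows "\<exists>t' r. feed P c (t @ y # B, out) = (t' @ min c y # B, out @ r)"
  using feed_append_cases[of P c t "y # B" out]
proof
  assume popped: "feed P c (t @ y # B, out) = feed P c (y # B, out @ t)"
  show ?thesis
  proof (cases "y < c")
    case True
    with popped push show ?thesis by (intro exI[of _ "[c]"] exI[of _ t]) simp
  next
    case False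
    then have "\<not> P (c # y # B)" "min c y = c" using above[of "[]"] \<open>c \<noteq> y\<close> by auto
    then have "feed P c (t @ y # B, out) = feed P c (B, out @ t @ [y])" using popped by simp
    moreover have "feed P c (B, out @ t @ [y]) = (c # B, out @ t @ [y])"
      using bottom by (cases B) auto
    ultimately show ?thesis using \<open>min c y = c\<close> by (intro exI[of _ "[]"] exI[of _ "t @ [y]"]) simp
  qed
next
  assume "\<exists>t1 t2. t = t1 @ t2 \<and> t2 \<noteq> [] \<and> P (c # t2 @ y # B) \<and>
    feed P c (t @ y # B, out) = (c # t2 @ y # B, out @ t1)"
  then obtain t1 t2 where "P (c # t2 @ y # B)" "feed P c (t @ y # B, out) = (c # t2 @ y # B, out @ t1)"
    by blast
  moreover from this have "min c y = y" using above by fastforce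
  ultimately show ?thesis by (intro exI[of _ "c # t2"] exI[of _ t1]) simp
qed

lemma fold_min_bottom:
  assumes above: "\<And>c y t2. c \<in> A \<Longrightarrow> y \<in> A \<Longrightarrow> c \<noteq> y \<Longrightarrow> P (c # t2 @ y # B) \<Longrightarrow> y < c"
    and push: "\<And>c y. c \<in> A \<Longrightarrow> y \<in> A \<Longrightarrow> y < c \<Longrightarrow> P (c # y # B)"
    and bottom: "\<And>c. c \<in> A \<Longrightarrow> B \<noteq> [] \<Longrightarrow> P (c # B)"
  shows "distinct (y # xs) \<Longrightarrow> set (y # xs) \<subseteq> A \<Longrightarrow>
    \<exists>t' r. fold (feed P) xs (t @ y # B, out) = (t' @ Min (set (y # xs)) # B, out @ r)"
proof (induction xs arbitrary: y t out)
  case (Cons c xs)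
  then have "c \<in> A" "y \<in> A" "c \<noteq> y" by auto
  then obtain t1 r1 where step: "feed P c (t @ y # B, out) = (t1 @ min c y # B, out @ r1)"
    using feed_min_bottom[of c y P B t out] above push bottom by blast
  have "distinct (min c y # xs)" "set (min c y # xs) \<subseteq> A"
    using Cons.prems by (auto simp: min_def)
  then obtain t2 r2 where "fold (feed P) xs (t1 @ min c y # B, out @ r1) =
      (t2 @ Min (set (min c y # xs)) # B, (out @ r1) @ r2)"
    using Cons.IH by blast
  moreover have "Min (set (min c y # xs)) = Min (set (y # c # xs))"
    by (cases "xs = []") (simp_all add: min.commute min.left_commute)
  ultimately show ?case using step by (intro exI[of _ t2] exI[of _ "r1 @ r2"]) simp
qed simp

lemma feed_above_bottom:
  assumes "B \<noteq> []" "P (c # B)"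
    and "\<And>t2. t2 \<noteq> [] \<Longrightarrow> suffix t2 t \<Longrightarrow> P (c # t2 @ B) \<longleftrightarrow> P' (c # t2)"
  shows "feed P c (t @ B, out) = apfst (\<lambda>s. s @ B) (feed P' c (t, out))"
  using assms(3)
proof (induction t arbitrary: out)
  case Nil
  with assms(1,2) show ?case by (cases B) auto
next
  case (Cons y t)
  have "P (c # y # t @ B) \<longleftrightarrow> P' (c # y # t)" using Cons.prems[of "y # t"] by simp
  moreover have "feed P c (t @ B, out @ [y]) = apfst (\<lambda>s. s @ B) (feed P' c (t, out @ [y]))"
    using Cons by (simp add: suffix_Cons)
  ultimately show ?case by simp
qed

lemma fold_above_bottom:
  assumes "B \<noteq> []" and "\<And>c. c \<in> A \<Longrightarrow> P (c # B)"
    and "\<And>c t t2. c \<in> A \<Longrightarrow> I t \<Longrightarrow> c \<notin> set t \<Longrightarrow> t2 \<noteq> [] \<Longrightarrow> suffix t2 t \<Longrightarrow>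
      P (c # t2 @ B) \<longleftrightarrow> P' (c # t2)"
    and "\<And>c t out. c \<in> A \<Longrightarrow> I t \<Longrightarrow> c \<notin> set t \<Longrightarrow> I (fst (feed P' c (t, out)))"
  shows "I t \<Longrightarrow> distinct xs \<Longrightarrow> set xs \<inter> set t = {} \<Longrightarrow> set xs \<subseteq> A \<Longrightarrow>
    fold (feed P) xs (t @ B, out) = apfst (\<lambda>s. s @ B) (fold (feed P') xs (t, out))"
proof (induction xs arbitrary: t out)
  case (Cons c xs)
  then have "c \<in> A" "c \<notin> set t" by auto
  with Cons.prems assms have step: "feed P c (t @ B, out) = apfst (\<lambda>s. s @ B) (feed P' c (t, out))"
    by (intro feed_above_bottom) auto
  obtain t' out' where S': "feed P' c (t, out) = (t', out')" by fastforce
  have "I t'" using assms(4)[of c t out] S' \<open>c \<in> A\<close> \<open>c \<notin> set t\<close> Cons.prems(1) by simp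
  moreover have "set xs \<inter> set t' = {}"
    using Cons.prems(2,3) set_fst_feed[of P' c t out] S' by auto
  ultimately show ?case using Cons step S' by simp
qed simp

section \<open>West's map\<close>

lemma feed_west_pops_smaller:
  assumes "b < c"
  shows "b \<notin> set (fst (feed (admissible {[2, 1]}) c S))"
proof
  assume b: "b \<in> set (fst (feed (admissible {[2, 1]}) c S))"
  obtain s where top: "fst (feed (admissible {[2, 1]}) c S) = c # s" using feed_top by blast
  with b assms have "b \<in> set s" by auto
  with top have "subseq [c, b] (fst (feed (admissible {[2, 1]}) c S))" by (simp add: subseq_singleton_left)
  then have "contains (fst (feed (admissible {[2, 1]}) c S)) [2, 1]"
    unfolding contains_21_iff using assms by blast
  moreover have "admissible {[2, 1]} (fst (feed (admissible {[2, 1]}) c S))"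
    using feed_admissible[of "admissible {[2, 1]}" c S] top \<open>b \<in> set s\<close> by auto
  ultimately show False by (simp add: admissible_def avoids_def)
qed

lemma sorted_west_s_avoids_231:
  assumes "distinct y" "sorted (west_s y)"
  shows "avoids y [2, 3, 1]"
proof -
  let ?P = "admissible {[2, 1]}"
  have west: "west_s y = flush (fold (feed ?P) y ([], []))"
    by (simp add: west_s_def stack_sort_T_eq_fold)
  have False if bca: "subseq [b, c, a] y" "a < b" "b < c" for a b c
  proof -
    obtain y1 y2 y3 where y: "y = y1 @ b # y2 @ c # y3" and "a \<in> set y3"
      using subseq3_split[OF bca(1)] by blast
    define S where "S = feed ?P c (fold (feed ?P) (y1 @ b # y2) ([], []))"
    \<comment> \<open>\<open>b\<close> leaves the stack before \<open>c\<close> is pushed, so it is output before \<open>a\<close> is read.\<close>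
    have "b \<notin> set (fst S)" unfolding S_def using bca(3) by (rule feed_west_pops_smaller)
    moreover have "set (flush S) = set (y1 @ b # y2 @ [c])"
      using set_flush_fold[of ?P "y1 @ b # y2 @ [c]" "([], [])"] by (simp add: S_def flush_def)
    ultimately have b_out: "b \<in> set (snd S)" and a_not_out: "a \<notin> set (snd S)"
      using assms(1) \<open>a \<in> set y3\<close> y by (auto simp: flush_def)
    have run: "fold (feed ?P) y ([], []) = fold (feed ?P) y3 S" by (simp add: y S_def)
    obtain r where "snd (fold (feed ?P) y3 S) = snd S @ r" using fold_feed_out_extends by blast
    then have out: "west_s y = snd S @ (r @ fst (fold (feed ?P) y3 S))"
      unfolding west run by (simp add: flush_def)
    have "a \<in> set (west_s y)"
      unfolding west using set_flush_fold \<open>a \<in> set y3\<close> y by (simp add: flush_def)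
    with out a_not_out have "a \<in> set (r @ fst (fold (feed ?P) y3 S))" by auto
    with assms(2) b_out have "b \<le> a" unfolding out sorted_append by blast
    with \<open>a < b\<close> show False by simp
  qed
  then show ?thesis unfolding avoids_def contains_231_iff by blast
qed

section \<open>Admissible stacks\<close>

definition avoids_123_321 :: "nat list \<Rightarrow> bool" where
  "avoids_123_321 = admissible {[1, 2, 3], [3, 2, 1]}"

definition avoids_12_321 :: "nat list \<Rightarrow> bool" where
  "avoids_12_321 = admissible {[1, 2], [3, 2, 1]}"

lemma avoids_123_321_iff:
  "avoids_123_321 l \<longleftrightarrow> \<not> (\<exists>p q r. subseq [p, q, r] l \<and> (p < q \<and> q < r \<or> r < q \<and> q < p))"
proof -
  have "avoids_123_321 l \<longleftrightarrow> avoids l [1, 2, 3] \<and> avoids l [3, 2, 1]"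
    unfolding avoids_123_321_def admissible_def by simp
  then show ?thesis unfolding avoids_def contains_123_iff contains_321_iff by blast
qed

lemma avoids_12_321_iff:
  "avoids_12_321 l \<longleftrightarrow> \<not> (\<exists>p q. subseq [p, q] l \<and> p < q) \<and>
     \<not> (\<exists>p q r. subseq [p, q, r] l \<and> r < q \<and> q < p)"
proof -
  have "avoids_12_321 l \<longleftrightarrow> avoids l [1, 2] \<and> avoids l [3, 2, 1]"
    unfolding avoids_12_321_def admissible_def by simp
  then show ?thesis unfolding avoids_def contains_12_iff contains_321_iff by blast
qed

lemma avoids_123_321_length2: "avoids_123_321 [p, q]"
  unfolding avoids_123_321_iff by (simp add: subseq3_Cons subseq2_Cons del: subseq_Cons2_iff)

lemma avoids_123_321_length3:
  "avoids_123_321 [p, q, r] \<longleftrightarrow> \<not> (p < q \<and> q < r) \<and> \<not> (r < q \<and> q < p)"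
  unfolding avoids_123_321_iff by (simp add: subseq3_Cons subseq2_Cons del: subseq_Cons2_iff)

lemma avoids_123_321_length4:
  assumes "u < a" "a < n" "c < n" "c \<noteq> u"
  shows "avoids_123_321 [c, n, u, a] \<longleftrightarrow> u < c"
proof
  assume "avoids_123_321 [c, n, u, a]"
  moreover have "subseq [c, u, a] [c, n, u, a]" by simp
  ultimately show "u < c" using assms unfolding avoids_123_321_iff by (metis linorder_neqE_nat)
next
  assume "u < c"
  with assms show "avoids_123_321 [c, n, u, a]"
    unfolding avoids_123_321_iff by (auto simp: subseq3_Cons subseq2_Cons simp del: subseq_Cons2_iff)
qed

lemma not_avoids_12_321_ascent: "subseq [p, q] l \<Longrightarrow> p < q \<Longrightarrow> \<not> avoids_12_321 l"
  unfolding avoids_12_321_iff by blast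

lemma avoids_12_321_distinct:
  assumes "distinct l"
  shows "avoids_12_321 l \<longleftrightarrow> l = [] \<or> (\<exists>c. l = [c]) \<or> (\<exists>c y. l = [c, y] \<and> y < c)"
proof
  assume adm: "avoids_12_321 l"
  have no_ascent: "\<not> x < y" if "subseq [x, y] l" for x y
    using adm that unfolding avoids_12_321_iff by blast
  show "l = [] \<or> (\<exists>c. l = [c]) \<or> (\<exists>c y. l = [c, y] \<and> y < c)"
  proof (cases l rule: remdups_adj.cases)
    case (3 x y l')
    have "y < x"
      using no_ascent[of x y] assms 3 by (simp add: subseq_singleton_left)
    show ?thesis
    proof (cases l')
      case Nil
      with 3 \<open>y < x\<close> show ?thesis by simp
    next
      case (Cons z l'')
      have "z < y"
        using no_ascent[of y z] assms 3 Cons by (simp add: subseq_singleton_left)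
      moreover have "subseq [x, y, z] l" using 3 Cons by simp
      ultimately show ?thesis using adm \<open>y < x\<close> unfolding avoids_12_321_iff by blast
    qed
  qed auto
next
  assume "l = [] \<or> (\<exists>c. l = [c]) \<or> (\<exists>c y. l = [c, y] \<and> y < c)"
  then show "avoids_12_321 l"
    unfolding avoids_12_321_iff by (auto simp: subseq3_Cons subseq2_Cons simp del: subseq_Cons2_iff)
qed

lemma avoids_12_321_pair: "a \<noteq> b \<Longrightarrow> avoids_12_321 [a, b] \<longleftrightarrow> b < a"
  by (auto simp: avoids_12_321_distinct)

lemma avoids_123_321_top_max:
  assumes "distinct (m # l)" "\<forall>e\<in>set l. e < m" "avoids_123_321 (m # l)"
  shows "length l \<le> 2"
proof (rule ccontr)
  assume "\<not> length l \<le> 2"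
  then obtain y1 y2 y3 l' where l: "l = y1 # y2 # y3 # l'"
    by (metis Suc_le_length_iff not_less_eq_eq numeral_2_eq_2)
  have no_321: "\<not> (r < q \<and> q < p)" and no_123: "\<not> (p < q \<and> q < r)" if "subseq [p, q, r] (m # l)" for p q r
    using assms(3) that unfolding avoids_123_321_iff by blast+
  have "y1 < y2" using no_321[of m y1 y2] assms l by (auto simp: subseq_singleton_left)
  moreover have "y2 < y3" using no_321[of m y2 y3] assms l by (auto simp: subseq_singleton_left)
  moreover have "subseq [y1, y2, y3] (m # l)"
    using l subseq_drop_many[of "[y1, y2, y3]" l "[m]"] by simp
  ultimately show False using no_123 by blast
qed

lemma avoids_123_321_append_large:
  assumes "distinct l" "\<forall>x\<in>set l. \<forall>e\<in>set B. x < e" "B = [b] \<or> (B = [b, b'] \<and> b' < b)"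
  shows "avoids_123_321 (l @ B) \<longleftrightarrow> avoids_12_321 l"
proof
  assume adm: "avoids_123_321 (l @ B)"
  have "b \<in> set B" using assms(3) by auto
  have "\<not> p < q" if pq: "subseq [p, q] l" for p q
  proof -
    have "subseq ([p, q] @ [b]) (l @ B)"
      using list_emb_append_mono[OF pq, of "[b]" B] \<open>b \<in> set B\<close> by (simp add: subseq_singleton_left)
    then have "subseq [p, q, b] (l @ B)" by simp
    moreover have "q \<in> set l" using subseq_Cons'[OF pq] by (simp add: subseq_singleton_left)
    then have "q < b" using assms(2) \<open>b \<in> set B\<close> by blast
    ultimately show ?thesis using adm unfolding avoids_123_321_iff by blast
  qed
  moreover have "\<not> (r < q \<and> q < p)" if "subseq [p, q, r] l" for p q r
    using adm subseq_rev_drop_many[OF that, of B] unfolding avoids_123_321_iff by blast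
  ultimately show "avoids_12_321 l" unfolding avoids_12_321_iff by blast
next
  assume "avoids_12_321 l"
  then have "l = [] \<or> (\<exists>c. l = [c]) \<or> (\<exists>c y. l = [c, y] \<and> y < c)"
    using avoids_12_321_distinct[OF assms(1)] by blast
  with assms(2,3) show "avoids_123_321 (l @ B)"
    unfolding avoids_123_321_iff
    by (elim disjE exE conjE) (auto simp: subseq3_Cons subseq2_Cons simp del: subseq_Cons2_iff)
qed

section \<open>The run of \<open>s_123_321\<close>\<close>

definition run :: "nat list \<Rightarrow> nat list \<times> nat list" where
  "run x = fold (feed avoids_123_321) x ([], [])"

lemma s_123_321_eq_flush_run: "s_123_321 x = flush (run x)"
  by (simp add: s_123_321_def stack_sort_T_eq_fold run_def avoids_123_321_def)

lemma run_append: "run (xs @ ys) = fold (feed avoids_123_321) ys (run xs)"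
  by (simp add: run_def)

lemma set_flush_run: "set (flush (run x)) = set x"
  using set_flush_fold[of avoids_123_321 x "([], [])"] by (simp add: run_def flush_def)

lemma distinct_flush_run: "distinct x \<Longrightarrow> distinct (flush (run x))"
  unfolding run_def by (rule distinct_flush_fold) (auto simp: flush_def)

lemma contains_231_s_123_321_of_prefix:
  assumes "subseq [p, q, r] (flush (run xs))" "r < p" "p < q"
  shows "contains (s_123_321 (xs @ ys)) [2, 3, 1]"
proof -
  have "subseq (flush (run xs)) (s_123_321 (xs @ ys))"
    unfolding s_123_321_eq_flush_run run_append by (rule subseq_flush_fold)
  with assms show ?thesis using contains_231I subseq_order.order_trans by blast
qed

lemma run_keeps_first:
  "\<exists>t r. run (a # P) = (t @ [a], r)"
proof -
  have "\<forall>c\<in>set P. avoids_123_321 [c, a]" by (simp add: avoids_123_321_length2)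
  then show ?thesis
    using fold_keeps_bottom[of "[a]" P avoids_123_321 "[]" "[]"] by (simp add: run_def)
qed

lemma feed_max_onto_bottom:
  assumes "distinct (m # t @ [a])" "\<forall>e\<in>set (t @ [a]). e < m"
  shows "\<exists>r. feed avoids_123_321 m (t @ [a], out) = ([m, a], out @ r) \<or>
    (\<exists>u. u < a \<and> feed avoids_123_321 m (t @ [a], out) = ([m, u, a], out @ r))"
  using feed_append_cases[of avoids_123_321 m t "[a]" out]
proof
  assume "feed avoids_123_321 m (t @ [a], out) = feed avoids_123_321 m ([a], out @ t)"
  then show ?thesis by (simp add: avoids_123_321_length2)
next
  assume "\<exists>t1 t2. t = t1 @ t2 \<and> t2 \<noteq> [] \<and> avoids_123_321 (m # t2 @ [a]) \<and>
    feed avoids_123_321 m (t @ [a], out) = (m # t2 @ [a], out @ t1)"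
  then obtain t1 t2 where t: "t = t1 @ t2" "t2 \<noteq> []" "avoids_123_321 (m # t2 @ [a])"
    and feed: "feed avoids_123_321 m (t @ [a], out) = (m # t2 @ [a], out @ t1)" by blast
  have "length (t2 @ [a]) \<le> 2"
    using avoids_123_321_top_max[of m "t2 @ [a]"] assms t by auto
  with t(2) obtain u where "t2 = [u]" by (cases t2) auto
  moreover from this have "u < a"
    using t(3) assms avoids_123_321_length3[of m u a] unfolding t(1) by auto
  ultimately show ?thesis using feed by auto
qed

lemma feed_max_onto_ascent:
  assumes "distinct (m # t @ [v, a])" "\<forall>e\<in>set (t @ [v, a]). e < m" "v < a"
  shows "\<exists>r. feed avoids_123_321 m (t @ [v, a], out) = ([m, v, a], out @ r)"
  using feed_append_cases[of avoids_123_321 m t "[v, a]" out]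
proof
  assume "feed avoids_123_321 m (t @ [v, a], out) = feed avoids_123_321 m ([v, a], out @ t)"
  moreover have "avoids_123_321 [m, v, a]" using assms(2,3) by (simp add: avoids_123_321_length3)
  ultimately show ?thesis by simp
next
  assume "\<exists>t1 t2. t = t1 @ t2 \<and> t2 \<noteq> [] \<and> avoids_123_321 (m # t2 @ [v, a]) \<and>
    feed avoids_123_321 m (t @ [v, a], out) = (m # t2 @ [v, a], out @ t1)"
  then obtain t1 t2 where "t = t1 @ t2" "t2 \<noteq> []" "avoids_123_321 (m # t2 @ [v, a])" by blast
  with avoids_123_321_top_max[of m "t2 @ [v, a]"] assms show ?thesis by auto
qed

lemma feed_avoids_123_321_second_min:
  assumes "c \<noteq> v" "v < a"
  shows "\<exists>t' r. feed avoids_123_321 c (t @ [v, a], out) = (t' @ [min c v, a], out @ r)"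
proof (rule feed_min_bottom)
  fix t2 assume "avoids_123_321 (c # t2 @ [v, a])"
  moreover have "subseq [c, v, a] (c # t2 @ [v, a])" by (simp add: subseq_drop_many)
  ultimately have "\<not> (c < v \<and> v < a)" unfolding avoids_123_321_iff by blast
  with assms show "v < c" by auto
qed (use assms in \<open>simp_all add: avoids_123_321_length2 avoids_123_321_length3\<close>)

lemma fold_avoids_123_321_second_Min:
  assumes "distinct (v # xs)" "\<forall>x\<in>set (v # xs). x < a"
  shows "\<exists>t' r. fold (feed avoids_123_321) xs (t @ [v, a], out) = (t' @ [Min (set (v # xs)), a], out @ r)"
proof (rule fold_min_bottom[where A = "{x. x < a}"])
  fix c y t2 assume "y \<in> {x. x < a}" "c \<noteq> y" "avoids_123_321 (c # t2 @ y # [a])"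
  moreover have "subseq [c, y, a] (c # t2 @ [y, a])" by (simp add: subseq_drop_many)
  ultimately have "\<not> (c < y \<and> y < a)" unfolding avoids_123_321_iff by blast
  with \<open>c \<noteq> y\<close> \<open>y \<in> {x. x < a}\<close> show "y < c" by auto
qed (use assms in \<open>auto simp: avoids_123_321_length2 avoids_123_321_length3\<close>)

lemma run_stack_below:
  assumes "run p = (st, out)" "distinct p" "\<forall>e\<in>set p. e < n"
  shows "distinct (n # st)" "\<forall>e\<in>set st. e < n"
proof -
  have "distinct (out @ st)" and set_eq: "set (out @ st) = set p"
    using distinct_flush_run[OF assms(2)] set_flush_run[of p] assms(1) by (simp_all add: flush_def)
  moreover have "set st \<subseteq> set p" unfolding set_eq[symmetric] by auto
  ultimately show "distinct (n # st)" "\<forall>e\<in>set st. e < n" using assms(3) by auto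
qed

lemma run_first_then_max:
  assumes "distinct (a # P)" "\<forall>e\<in>set (a # P). e < n"
  shows "\<exists>out. run (a # P @ [n]) = ([n, a], out) \<or> (\<exists>u. u < a \<and> run (a # P @ [n]) = ([n, u, a], out))"
proof -
  obtain t r where first: "run (a # P) = (t @ [a], r)" using run_keeps_first by blast
  have "run (a # P @ [n]) = feed avoids_123_321 n (t @ [a], r)"
    using run_append[of "a # P" "[n]"] first by simp
  moreover have "distinct (n # t @ [a])" "\<forall>e\<in>set (t @ [a]). e < n"
    using run_stack_below[OF first assms] by simp_all
  ultimately show ?thesis using feed_max_onto_bottom[of n t a r] by auto
qed

lemma run_ascent_then_max:
  assumes "distinct (b # p1 # P)" "\<forall>e\<in>set (p1 # P). e < b" "b < n"
  shows "\<exists>out. run (b # p1 # P @ [n]) = ([n, Min (set (p1 # P)), b], out)"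
proof -
  let ?v = "Min (set (p1 # P))"
  have "run [b, p1] = ([] @ [p1, b], [])" by (simp add: run_def avoids_123_321_length2)
  moreover obtain t r where "fold (feed avoids_123_321) P ([] @ [p1, b], []) = (t @ [?v, b], [] @ r)"
    using fold_avoids_123_321_second_Min[of p1 P b "[]" "[]"] assms(1,2) by auto
  ultimately have before: "run (b # p1 # P) = (t @ [?v, b], r)"
    using run_append[of "[b, p1]" P] by simp
  have "?v < b" using assms(2) Min_in[of "set (p1 # P)"] by auto
  have "\<forall>e\<in>set (b # p1 # P). e < n" using assms(2,3) by auto
  from run_stack_below[OF before assms(1) this]
  have "distinct (n # t @ [?v, b])" "\<forall>e\<in>set (t @ [?v, b]). e < n" by simp_all
  moreover have "run (b # p1 # P @ [n]) = feed avoids_123_321 n (t @ [?v, b], r)"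
    using run_append[of "b # p1 # P" "[n]"] before by simp
  ultimately show ?thesis using feed_max_onto_ascent[of n t ?v b r] \<open>?v < b\<close> by auto
qed

definition s_12_321 :: "nat list \<Rightarrow> nat list" where
  "s_12_321 = stack_sort_T {[1, 2], [3, 2, 1]}"

lemma s_12_321_eq_flush_fold: "s_12_321 w = flush (fold (feed avoids_12_321) w ([], []))"
  by (simp add: s_12_321_def stack_sort_T_eq_fold avoids_12_321_def)

lemma fold_avoids_123_321_above_large:
  assumes B: "B = [b] \<or> (B = [b, b'] \<and> b' < b)"
    and "avoids_12_321 t" "distinct (t @ w)" "\<forall>x\<in>set t \<union> set w. \<forall>e\<in>set B. x < e"
  shows "fold (feed avoids_123_321) w (t @ B, out) =
    apfst (\<lambda>s. s @ B) (fold (feed avoids_12_321) w (t, out))"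
proof (rule fold_above_bottom[where A = "{x. \<forall>e\<in>set B. x < e}"
      and I = "\<lambda>t. avoids_12_321 t \<and> distinct t \<and> (\<forall>x\<in>set t. \<forall>e\<in>set B. x < e)"])
  show "B \<noteq> []" using B by auto
next
  fix c assume "c \<in> {x. \<forall>e\<in>set B. x < e}"
  then show "avoids_123_321 (c # B)"
    using avoids_123_321_append_large[of "[c]" B b b'] avoids_12_321_distinct[of "[c]"] B by simp
next
  fix c t t2
  assume c: "c \<in> {x. \<forall>e\<in>set B. x < e}" and t: "avoids_12_321 t \<and> distinct t \<and> (\<forall>x\<in>set t. \<forall>e\<in>set B. x < e)"
    and "c \<notin> set t" "suffix t2 t"
  moreover from this have "set t2 \<subseteq> set t" "distinct t2" by (auto dest: set_mono_suffix distinct_suffix)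
  ultimately show "avoids_123_321 (c # t2 @ B) \<longleftrightarrow> avoids_12_321 (c # t2)"
    using avoids_123_321_append_large[of "c # t2" B b b'] B by auto
next
  fix c t out
  assume c: "c \<in> {x. \<forall>e\<in>set B. x < e}" and t: "avoids_12_321 t \<and> distinct t \<and> (\<forall>x\<in>set t. \<forall>e\<in>set B. x < e)"
    and "c \<notin> set t"
  obtain s1 s2 where eq: "t = s1 @ s2" "feed avoids_12_321 c (t, out) = (c # s2, out @ s1)"
    using feed_pop_push by blast
  have "avoids_12_321 [c]" using avoids_12_321_distinct[of "[c]"] by simp
  then have "avoids_12_321 (c # s2)"
    using feed_admissible[of avoids_12_321 c "(t, out)"] eq by auto
  with eq t c \<open>c \<notin> set t\<close> show "avoids_12_321 (fst (feed avoids_12_321 c (t, out))) \<and>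
      distinct (fst (feed avoids_12_321 c (t, out))) \<and>
      (\<forall>x\<in>set (fst (feed avoids_12_321 c (t, out))). \<forall>e\<in>set B. x < e)" by auto
qed (use assms in auto)

lemma s_123_321_append_above_large:
  assumes "run p = (t @ B, out)" "B = [b] \<or> (B = [b, b'] \<and> b' < b)"
    and "avoids_12_321 t" "distinct (t @ w)" "\<forall>x\<in>set t \<union> set w. \<forall>e\<in>set B. x < e"
  shows "s_123_321 (p @ w) = out @ flush (fold (feed avoids_12_321) w (t, [])) @ B"
proof -
  have "fold (feed avoids_12_321) w (t, out @ []) = apsnd ((@) out) (fold (feed avoids_12_321) w (t, []))"
    by (rule fold_feed_prepend_out)
  then show ?thesis
    using fold_avoids_123_321_above_large[OF assms(2-5), of out]
    unfolding s_123_321_eq_flush_run run_append assms(1) by (simp add: flush_def apfst_def map_prod_def split_def)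
qed

lemma s_123_321_prefix_1:
  assumes "\<forall>e\<in>set w. e < b" "distinct w"
  shows "s_123_321 (b # w) = s_12_321 w @ [b]"
proof -
  have "run [b] = ([] @ [b], [])" by (simp add: run_def)
  from s_123_321_append_above_large[OF this, of b b' w] assms show ?thesis
    by (simp add: s_12_321_eq_flush_fold avoids_12_321_distinct)
qed

lemma s_123_321_prefix_12:
  assumes "a < b" "\<forall>e\<in>set w. e < a" "distinct w"
  shows "s_123_321 (a # b # w) = s_12_321 w @ [b, a]"
proof -
  have "run [a, b] = ([] @ [b, a], [])"
    using avoids_123_321_length2[of b a] by (simp add: run_def)
  moreover have "\<forall>e\<in>set w. e < b" using assms(1,2) by auto
  ultimately show ?thesis using s_123_321_append_above_large[of "[a, b]" "[]" "[b, a]" "[]" b a w] assms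
    by (simp add: s_12_321_eq_flush_fold avoids_12_321_distinct)
qed

lemma s_123_321_prefix_213:
  assumes "c < b" "b < a" "\<forall>e\<in>set w. e < c" "distinct w" "w \<noteq> []"
  shows "s_123_321 (b # c # a # w) = [a, c] @ s_12_321 w @ [b]"
proof -
  obtain d w' where w: "w = d # w'" using assms(5) by (cases w) auto
  with assms(3) have "d < c" by simp
  have "\<not> avoids_123_321 [d, a, c, b]"
  proof -
    have "subseq [d, c, b] [d, a, c, b]" by simp
    with \<open>d < c\<close> \<open>c < b\<close> show ?thesis unfolding avoids_123_321_iff by blast
  qed
  moreover have "avoids_123_321 [a, c, b]" "\<not> avoids_123_321 [d, c, b]"
    using \<open>d < c\<close> assms(1,2) by (simp_all add: avoids_123_321_length3)
  ultimately have "run [b, c, a, d] = ([d] @ [b], [a, c])"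
    by (simp add: run_def avoids_123_321_length2)
  moreover have "\<forall>e\<in>set w'. e < b" using assms(1,3) w by auto
  ultimately show ?thesis
    using s_123_321_append_above_large[of "[b, c, a, d]" "[d]" "[b]" "[a, c]" b b' w'] assms w
    by (simp add: s_12_321_eq_flush_fold avoids_12_321_distinct)
qed

section \<open>The map \<open>s_12_321\<close> and the swap of 1 and 2\<close>

lemma s_12_321_Cons_max:
  assumes "\<forall>e\<in>set w. e < m"
  shows "s_12_321 (m # w) = m # s_12_321 w"
proof (cases w)
  case Nil
  then show ?thesis by (simp add: s_12_321_eq_flush_fold flush_def)
next
  case (Cons c w')
  then have "c < m" using assms by simp
  then have "fold (feed avoids_12_321) (m # w) ([], []) = fold (feed avoids_12_321) w' ([c], [m] @ [])"
    by (simp add: Cons avoids_12_321_pair)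
  also have "\<dots> = apsnd ((@) [m]) (fold (feed avoids_12_321) w' ([c], []))"
    by (rule fold_feed_prepend_out)
  finally show ?thesis by (simp add: s_12_321_eq_flush_fold Cons flush_def)
qed

lemma s_12_321_max_second:
  assumes "a < m" "\<forall>e\<in>set w. e < m"
  shows "s_12_321 (a # m # w) = m # s_12_321 (a # w)"
proof (cases w)
  case Nil
  with assms(1) show ?thesis by (simp add: s_12_321_eq_flush_fold flush_def avoids_12_321_pair)
next
  case (Cons c w')
  then have "c < m" using assms(2) by simp
  moreover have "\<not> avoids_12_321 [c, m, a]" by (rule not_avoids_12_321_ascent[of c m]) (simp_all add: \<open>c < m\<close>)
  ultimately have "fold (feed avoids_12_321) (a # m # w) ([], []) =
      fold (feed avoids_12_321) w' (feed avoids_12_321 c ([a], [m] @ []))"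
    using assms(1) by (simp add: Cons avoids_12_321_pair)
  also have "\<dots> = apsnd ((@) [m]) (fold (feed avoids_12_321) w' (feed avoids_12_321 c ([a], [])))"
  proof -
    obtain st out where S: "feed avoids_12_321 c ([a], []) = (st, out)" by fastforce
    then have "feed avoids_12_321 c ([a], [m] @ []) = (st, [m] @ out)"
      unfolding feed_prepend_out by simp
    then show ?thesis by (simp only: S fold_feed_prepend_out)
  qed
  finally show ?thesis by (simp add: s_12_321_eq_flush_fold Cons flush_def)
qed

lemma s_12_321_max_early:
  assumes "length p \<le> 1" "\<forall>e\<in>set p \<union> set q. e < m"
  shows "s_12_321 (p @ m # q) = m # s_12_321 (p @ q)"
proof (cases p)
  case Nil
  with assms(2) show ?thesis by (simp add: s_12_321_Cons_max)
next
  case (Cons a p')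
  with assms show ?thesis by (simp add: s_12_321_max_second)
qed

lemma s_12_321_pair: "a \<noteq> b \<Longrightarrow> s_12_321 [a, b] = [max a b, min a b]"
  by (auto simp: s_12_321_eq_flush_fold flush_def avoids_12_321_pair)

lemma fold_avoids_12_321_bottom_Min:
  assumes "distinct (y # xs)"
  shows "\<exists>t r. fold (feed avoids_12_321) (y # xs) ([], []) = (t @ [Min (set (y # xs))], r)"
proof -
  have "\<exists>t r. fold (feed avoids_12_321) xs ([] @ [y], []) = (t @ [Min (set (y # xs))], [] @ r)"
  proof (rule fold_min_bottom[where A = UNIV])
    fix c y' t2
    assume "c \<noteq> y'" "avoids_12_321 (c # t2 @ [y'])"
    moreover have "subseq [c, y'] (c # t2 @ [y'])" by (simp add: subseq_singleton_left)
    ultimately show "y' < c" using not_avoids_12_321_ascent[of c y'] by fastforce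
  qed (use assms in \<open>auto simp: avoids_12_321_pair\<close>)
  then show ?thesis by simp
qed

lemma fold_avoids_12_321_max_onto_Min:
  assumes "distinct (p @ [m])" "p \<noteq> []" "\<forall>e\<in>set p. e < m"
  shows "\<exists>r. fold (feed avoids_12_321) (p @ [m]) ([], []) = ([m, Min (set p)], r)"
proof -
  define S0 where "S0 = fold (feed avoids_12_321) p ([], [])"
  define S where "S = feed avoids_12_321 m S0"
  have S_fold: "S = fold (feed avoids_12_321) (p @ [m]) ([], [])" by (simp add: S_def S0_def)
  have "Min (set p) \<in> set p" using Min_in[of "set p"] assms(2) by simp
  with assms(3) have "Min (set p) < m" by blast
  then have "Min (set (p @ [m])) = Min (set p)"
    using \<open>Min (set p) \<in> set p\<close> by (intro Min_eqI) auto
  moreover obtain y xs where p: "p = y # xs" using assms(2) by (cases p) auto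
  then have "\<exists>t r. fold (feed avoids_12_321) (p @ [m]) ([], []) = (t @ [Min (set (p @ [m]))], r)"
    using fold_avoids_12_321_bottom_Min[of y "xs @ [m]"] assms(1) by simp
  ultimately obtain t r where bottom: "S = (t @ [Min (set p)], r)" unfolding S_fold by auto
  obtain s where top: "fst S = m # s"
    using feed_top[of avoids_12_321 m S0] unfolding S_def by blast
  have "distinct (fst S)"
    using distinct_flush_fold[of "([], [])" "p @ [m]" avoids_12_321] assms(1)
    unfolding S_fold by (simp add: flush_def)
  moreover have "avoids_12_321 (fst S)"
    using feed_admissible[of avoids_12_321 m S0] bottom top \<open>Min (set p) < m\<close> unfolding S_def by auto
  ultimately have "length (fst S) \<le> 2" by (auto simp: avoids_12_321_distinct)
  with bottom top \<open>Min (set p) < m\<close> have "S = ([m, Min (set p)], r)" by (cases s) auto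
  then show ?thesis unfolding S_fold by blast
qed

lemma s_12_321_contains_231:
  assumes "distinct (p @ m # q)" "\<forall>e\<in>set p. e < m" "2 \<le> length p"
  shows "contains (s_12_321 (p @ m # q)) [2, 3, 1]"
proof -
  let ?\<beta> = "Min (set p)"
  have "p \<noteq> []" using assms(3) by auto
  then obtain out where S: "fold (feed avoids_12_321) (p @ [m]) ([], []) = ([m, ?\<beta>], out)"
    using fold_avoids_12_321_max_onto_Min[of p m] assms(1,2) by auto
  have "?\<beta> \<in> set p" using Min_in[of "set p"] \<open>p \<noteq> []\<close> by simp
  from assms(3) obtain x y p' where p: "p = x # y # p'" by (cases p rule: remdups_adj.cases) auto
  with assms(1) have "x \<noteq> ?\<beta> \<or> y \<noteq> ?\<beta>" by auto
  moreover have "x \<in> set p" "y \<in> set p" using p by auto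
  ultimately obtain f where f: "f \<in> set p" "f \<noteq> ?\<beta>" by blast
  with assms(2) have "?\<beta> < f" "f < m" by (auto simp: le_neq_trans)
  have "f \<in> set (out @ [m, ?\<beta>])"
    using set_flush_fold[of avoids_12_321 "p @ [m]" "([], [])"] f(1) S by (simp add: flush_def)
  with f(2) \<open>f < m\<close> obtain o1 o2 where "out = o1 @ f # o2" by (auto dest: split_list)
  then have "subseq [f, m, ?\<beta>] (flush (fold (feed avoids_12_321) (p @ [m]) ([], [])))"
    using S subseq3_appendI[of f m ?\<beta> o1 o2 "[]" "[]"] by (simp add: flush_def)
  moreover have "subseq (flush (fold (feed avoids_12_321) (p @ [m]) ([], []))) (s_12_321 (p @ m # q))"
    unfolding s_12_321_eq_flush_fold using subseq_flush_fold[of _ avoids_12_321 q] by simp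
  ultimately show ?thesis using contains_231I \<open>?\<beta> < f\<close> \<open>f < m\<close> subseq_order.order_trans by blast
qed

lemma swap12_Cons: "swap12 (x # xs) = (if x = 1 then 2 else if x = 2 then 1 else x) # swap12 xs"
  by (simp add: swap12_def)

lemma swap12_append: "swap12 (xs @ ys) = swap12 xs @ swap12 ys"
  by (simp add: swap12_def)

lemma swap12_large: "\<forall>v\<in>set xs. 3 \<le> v \<Longrightarrow> swap12 xs = xs"
  by (induction xs) (auto simp: swap12_Cons, simp add: swap12_def)

lemma set_swap12: "{1, 2} \<subseteq> set xs \<Longrightarrow> set (swap12 xs) = set xs"
  by (auto simp: swap12_def image_iff)

lemma distinct_swap12: "distinct (swap12 xs) \<longleftrightarrow> distinct xs"
  by (auto simp: swap12_def distinct_map inj_on_def)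

lemma s_12_321_swap12_base:
  assumes "set w = {1, 2}" "distinct w"
  shows "s_12_321 (swap12 w) = s_12_321 w"
proof -
  from assms have "length w = 2" using distinct_card[of w] by simp
  then obtain x y where "w = [x, y]" by (auto simp: numeral_2_eq_2 length_Suc_conv)
  with assms(1) have "w = [1, 2] \<or> w = [2, 1]" by (auto simp: doubleton_eq_iff)
  then show ?thesis by (auto simp: swap12_def s_12_321_pair)
qed

lemma s_12_321_remove_max:
  assumes "distinct (p @ m # q)" "\<forall>e\<in>set p \<union> set q. e < m" "avoids (s_12_321 (p @ m # q)) [2, 3, 1]"
  shows "length p \<le> 1" "s_12_321 (p @ m # q) = m # s_12_321 (p @ q)"
proof -
  show "length p \<le> 1"
  proof (rule ccontr)
    assume "\<not> length p \<le> 1"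
    with assms(1,2) have "contains (s_12_321 (p @ m # q)) [2, 3, 1]"
      using s_12_321_contains_231[of p m q] by simp
    with assms(3) show False by (simp add: avoids_def)
  qed
  then show "s_12_321 (p @ m # q) = m # s_12_321 (p @ q)"
    using assms(2) by (rule s_12_321_max_early)
qed

lemma three_le_Max:
  fixes w :: "nat list"
  assumes "\<not> set w \<subseteq> {1, 2}" "0 \<notin> set w"
  shows "3 \<le> Max (set w)"
proof -
  obtain v where v: "v \<in> set w" "v \<notin> {1, 2}" using assms(1) by blast
  with assms(2) have "v \<noteq> 0" by (cases v) auto
  with v(2) have "3 \<le> v" by auto
  also have "v \<le> Max (set w)" using v(1) by simp
  finally show ?thesis .
qed

lemma s_12_321_swap12:
  assumes "distinct w" "0 \<notin> set w" "{1, 2} \<subseteq> set w" "avoids (s_12_321 w) [2, 3, 1]"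
  shows "s_12_321 (swap12 w) = s_12_321 w"
  using assms
proof (induction "length w" arbitrary: w rule: less_induct)
  case (less w)
  show ?case
  proof (cases "set w \<subseteq> {1, 2}")
    case True
    with less.prems(1,3) show ?thesis by (intro s_12_321_swap12_base) auto
  next
    case False
    define m where "m = Max (set w)"
    have "m \<in> set w" unfolding m_def using less.prems(3) by (intro Max_in) auto
    have "\<forall>e\<in>set w. e \<le> m" unfolding m_def by simp
    have "3 \<le> m" unfolding m_def using False less.prems(2) by (rule three_le_Max)
    from \<open>m \<in> set w\<close> obtain p q where w: "w = p @ m # q" by (meson split_list)
    with less.prems(1) \<open>\<forall>e\<in>set w. e \<le> m\<close> have below: "\<forall>e\<in>set p \<union> set q. e < m"
      by (auto simp: le_less)
    note max = s_12_321_remove_max[of p m q, folded w, OF less.prems(1) below less.prems(4)]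
    have "{1, 2} \<subseteq> set (p @ q)" using less.prems(3) w \<open>3 \<le> m\<close> by auto
    then have "\<forall>e\<in>set (swap12 p) \<union> set (swap12 q). e < m"
      using below set_swap12[of "p @ q"] by (simp add: swap12_append)
    moreover have "swap12 w = swap12 p @ m # swap12 q"
      using w \<open>3 \<le> m\<close> by (simp add: swap12_append swap12_Cons)
    ultimately have swap_w: "s_12_321 (swap12 w) = m # s_12_321 (swap12 (p @ q))"
      using s_12_321_max_early[of "swap12 p" "swap12 q" m] max(1) by (simp add: swap12_append swap12_def)
    have "subseq (s_12_321 (p @ q)) (s_12_321 w)"
      unfolding max(2) by (simp add: subseq_drop_many[of _ _ "[m]", simplified])
    then have "avoids (s_12_321 (p @ q)) [2, 3, 1]"
      using less.prems(4) contains_subseq unfolding avoids_def by blast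
    moreover have "distinct (p @ q)" "0 \<notin> set (p @ q)" "length (p @ q) < length w"
      using less.prems(1,2) w by auto
    ultimately have "s_12_321 (swap12 (p @ q)) = s_12_321 (p @ q)"
      using less.hyps \<open>{1, 2} \<subseteq> set (p @ q)\<close> by blast
    with max(2) swap_w show ?thesis by simp
  qed
qed

section \<open>Prefixes that do not create 231\<close>

lemma contains_231_of_output:
  assumes "run p = (m # st, out)" "b \<in> set out" "r \<in> set st" "r < b" "b < m"
  shows "contains (s_123_321 (p @ q)) [2, 3, 1]"
proof -
  obtain o1 o2 where "out = o1 @ b # o2" using assms(2) by (meson split_list)
  moreover obtain s1 s2 where "st = s1 @ r # s2" using assms(3) by (meson split_list)
  ultimately have "subseq [b, m, r] (flush (run p))"
    using assms(1) subseq3_appendI[of b m r o1 o2 s1 s2] by (simp add: flush_def)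
  then show ?thesis using contains_231_s_123_321_of_prefix assms(4,5) by blast
qed

lemma contains_231_above_max_bottom:
  assumes "run p = ([n, a], out)" "a < b" "b < n" "b \<in> set q" "distinct (p @ q)" "\<forall>c\<in>set q. c < n"
  shows "contains (s_123_321 (p @ q)) [2, 3, 1]"
proof -
  obtain q1 q2 where q: "q = q1 @ b # q2" using assms(4) by (meson split_list)
  have "\<forall>c\<in>set q1. c < n" using assms(6) q by simp
  with assms(2,3) have "\<forall>c\<in>set q1. avoids_123_321 (c # [n, a])"
    by (auto simp: avoids_123_321_length3)
  then obtain t r where "fold (feed avoids_123_321) q1 ([] @ [n, a], out) = (t @ [n, a], out @ r)"
    using fold_keeps_bottom[of "[n, a]" q1 avoids_123_321 "[]" out] by auto
  moreover obtain t' r' where "feed avoids_123_321 b (t @ [n, a], out @ r) = (b # t' @ [n, a], (out @ r) @ r')"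
    using feed_keeps_bottom[of "[n, a]" avoids_123_321 b t "out @ r"] assms(2,3)
    by (auto simp: avoids_123_321_length3)
  ultimately have "run (p @ q1 @ [b]) = (b # t' @ [n, a], out @ r @ r')"
    using assms(1) by (simp add: run_append)
  then have "subseq [b, n, a] (flush (run (p @ q1 @ [b])))"
    using subseq3_appendI[of b n a "out @ r @ r'" t' "[]" "[]"] by (simp add: flush_def)
  from contains_231_s_123_321_of_prefix[OF this _ assms(3), of q2] assms(2) show ?thesis
    using q by simp
qed

text \<open>Both alternatives survive every later entry below \<open>n\<close>, and a later entry strictly between
  \<open>u\<close> and \<open>n\<close>, other than \<open>a\<close>, completes a 231.\<close>

definition primed_231 :: "nat \<Rightarrow> nat \<Rightarrow> nat \<Rightarrow> nat list \<times> nat list \<Rightarrow> bool" where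
  "primed_231 n u a S \<longleftrightarrow>
     (\<exists>t. fst S = t @ [n, u, a]) \<or> (\<exists>t v. fst S = t @ [v, a] \<and> v < u \<and> u \<in> set (snd S))"

lemma feed_onto_n_u_a:
  assumes "c \<noteq> u" "c < n" "u < a" "a < n"
  shows "(\<exists>t' r. feed avoids_123_321 c (t @ [n, u, a], out) = (t' @ [n, u, a], out @ r)) \<or>
    c < u \<and> feed avoids_123_321 c (t @ [n, u, a], out) = ([c, a], out @ t @ [n, u])"
  using feed_append_cases[of avoids_123_321 c t "[n, u, a]" out]
proof
  assume popped: "feed avoids_123_321 c (t @ [n, u, a], out) = feed avoids_123_321 c ([n, u, a], out @ t)"
  show ?thesis
  proof (cases "u < c")
    case True
    with assms have "avoids_123_321 [c, n, u, a]" by (simp add: avoids_123_321_length4)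
    with popped show ?thesis by (intro disjI1 exI[of _ "[c]"] exI[of _ t]) simp
  next
    case False
    with assms(1) have "c < u" by simp
    with assms(2-4) have "\<not> avoids_123_321 [c, n, u, a]" "\<not> avoids_123_321 [c, u, a]"
      by (simp_all add: avoids_123_321_length4 avoids_123_321_length3)
    with popped \<open>c < u\<close> show ?thesis by (simp add: avoids_123_321_length2)
  qed
next
  assume "\<exists>t1 t2. t = t1 @ t2 \<and> t2 \<noteq> [] \<and> avoids_123_321 (c # t2 @ [n, u, a]) \<and>
    feed avoids_123_321 c (t @ [n, u, a], out) = (c # t2 @ [n, u, a], out @ t1)"
  then obtain t1 t2 where "feed avoids_123_321 c (t @ [n, u, a], out) = (c # t2 @ [n, u, a], out @ t1)"
    by blast
  then show ?thesis by (intro disjI1 exI[of _ "c # t2"] exI[of _ t1]) simp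
qed

lemma feed_primed_231:
  assumes "primed_231 n u a S" "c \<notin> set (flush S)" "c < n" "u < a" "a < n"
  shows "primed_231 n u a (feed avoids_123_321 c S)"
proof -
  obtain st out where S: "S = (st, out)" by fastforce
  from assms(1) consider (nua) t where "st = t @ [n, u, a]"
    | (out) t v where "st = t @ [v, a]" "v < u" "u \<in> set out"
    unfolding primed_231_def S by auto
  then show ?thesis
  proof cases
    case nua
    then have "c \<noteq> u" using assms(2) by (auto simp: S flush_def)
    with feed_onto_n_u_a[of c u n a t out] assms(3-5) nua show ?thesis
      by (auto simp: S primed_231_def)
  next
    case out
    have "c \<noteq> v" using assms(2) out by (auto simp: S flush_def)
    then obtain t' r where "feed avoids_123_321 c (t @ [v, a], out) = (t' @ [min c v, a], out @ r)"
      using feed_avoids_123_321_second_min[of c v a t out] out(2) assms(4) by auto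
    with out show ?thesis unfolding S primed_231_def by force
  qed
qed

lemma fold_primed_231:
  "primed_231 n u a S \<Longrightarrow> distinct xs \<Longrightarrow> set xs \<inter> set (flush S) = {} \<Longrightarrow> \<forall>c\<in>set xs. c < n \<Longrightarrow>
   u < a \<Longrightarrow> a < n \<Longrightarrow> primed_231 n u a (fold (feed avoids_123_321) xs S)"
proof (induction xs arbitrary: S)
  case (Cons c xs)
  then have "primed_231 n u a (feed avoids_123_321 c S)" by (intro feed_primed_231) auto
  moreover have "set xs \<inter> set (flush (feed avoids_123_321 c S)) = {}"
    using Cons.prems(2,3) set_flush_fold[of avoids_123_321 "[c]" S] by auto
  ultimately show ?case using Cons by simp
qed simp

lemma contains_231_of_primed:
  assumes "primed_231 n u a (run p)" "u < a" "a < n" "u < b" "b < n" "b \<noteq> a"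
    and "b \<in> set q" "distinct (p @ q)" "\<forall>c\<in>set q. c < n"
  shows "contains (s_123_321 (p @ q)) [2, 3, 1]"
proof -
  obtain q1 q2 where q: "q = q1 @ b # q2" using assms(7) by (meson split_list)
  define S where "S = run (p @ q1 @ [b])"
  have "set (q1 @ [b]) \<inter> set (flush (run p)) = {}"
    using assms(8) q set_flush_run[of p] by auto
  then have "primed_231 n u a S"
    unfolding S_def run_append using fold_primed_231[OF assms(1), of "q1 @ [b]"] assms(2,3,8,9) q
    by simp
  moreover obtain s where top: "fst S = b # s"
    using feed_top[of avoids_123_321 b "fold (feed avoids_123_321) q1 (run p)"]
    unfolding S_def by (simp add: run_append) blast
  ultimately consider (nua) t where "b # s = t @ [n, u, a]"
    | (out) t v where "b # s = t @ [v, a]" "v < u" "u \<in> set (snd S)"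
    unfolding primed_231_def by auto
  then show ?thesis
  proof cases
    case nua
    moreover have "b \<notin> set [n, u, a]" using assms(4-6) by auto
    ultimately obtain t' where "t = b # t'" by (cases t) auto
    then have "subseq [b, n, u] (flush S)"
      using top nua subseq3_appendI[of b n u "snd S" t' "[]" "[a]"] by (simp add: flush_def)
    then show ?thesis
      using contains_231_s_123_321_of_prefix[of b n u "p @ q1 @ [b]" q2] assms(4,5) q
      unfolding S_def by simp
  next
    case (out t v)
    moreover have "b \<notin> set [v, a]" using out(2) assms(4,6) by auto
    ultimately obtain t' where "t = b # t'" by (cases t) auto
    moreover obtain o1 o2 where "snd S = o1 @ u # o2" using out(3) by (meson split_list)
    ultimately have "subseq [u, b, v] (flush S)"
      using top out(1) subseq3_appendI[of u b v o1 o2 t' "[a]"] by (simp add: flush_def)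
    then show ?thesis
      using contains_231_s_123_321_of_prefix[of u b v "p @ q1 @ [b]" q2] out(2) assms(4) q
      unfolding S_def by simp
  qed
qed

lemma contains_231_after_n_a:
  assumes "run p = ([n, a], out)" "a < b" "b < n" "b \<in> set (p @ q)" "distinct (p @ q)"
    and "\<forall>c\<in>set q. c < n"
  shows "contains (s_123_321 (p @ q)) [2, 3, 1]"
proof (cases "b \<in> set p")
  case True
  then have "b \<in> set out" using set_flush_run[of p] assms(1-3) by (auto simp: flush_def)
  with assms(1-3) show ?thesis using contains_231_of_output[of p n "[a]" out b a q] by simp
next
  case False
  with assms show ?thesis using contains_231_above_max_bottom[of p n a out b q] by simp
qed

lemma contains_231_after_n_u_a:
  assumes "run p = ([n, u, a], out)" "u < a" "a < n" "u < b" "b < n" "b \<noteq> a"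
    and "b \<in> set (p @ q)" "distinct (p @ q)" "\<forall>c\<in>set q. c < n"
  shows "contains (s_123_321 (p @ q)) [2, 3, 1]"
proof (cases "b \<in> set p")
  case True
  then have "b \<in> set out" using set_flush_run[of p] assms(1-6) by (auto simp: flush_def)
  with assms(1,4,5) show ?thesis using contains_231_of_output[of p n "[u, a]" out b u q] by simp
next
  case False
  have "primed_231 n u a (run p)" using assms(1) by (simp add: primed_231_def)
  with False assms show ?thesis using contains_231_of_primed[of n u a p b q] by simp
qed

lemma contains_231_if_first_small:
  assumes "distinct (a # P @ n # Q)" "set (a # P @ n # Q) = {1..n}" "a < n - 1"
  shows "contains (s_123_321 (a # P @ n # Q)) [2, 3, 1]"
proof -
  have below: "\<forall>e\<in>set (a # P @ Q). e < n"
    using assms(1,2) by (fastforce simp: le_less)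
  then obtain out where after_n:
      "run (a # P @ [n]) = ([n, a], out) \<or> (\<exists>u. u < a \<and> run (a # P @ [n]) = ([n, u, a], out))"
    using run_first_then_max[of a P n] assms(1) by auto
  have "n - 1 \<in> set ((a # P @ [n]) @ Q)" using assms(2,3) by auto
  with after_n assms(1,3) below show ?thesis
    using contains_231_after_n_a[of "a # P @ [n]" n a out "n - 1" Q]
      contains_231_after_n_u_a[of "a # P @ [n]" n _ a out "n - 1" Q] by auto
qed

lemma distinct_eq_singleton_if_Min_upper:
  fixes xs :: "nat list"
  assumes "distinct xs" "xs \<noteq> []" "\<forall>e\<in>set xs. e \<le> k" "Min (set xs) = k"
  shows "xs = [k]"
proof -
  have "set xs = {k}"
    using assms(2-4) Min_le[of "set xs"] Min_in[of "set xs"] by (fastforce intro: antisym)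
  with assms(1) show ?thesis using distinct_card[of xs] by (cases xs rule: remdups_adj.cases) auto
qed

lemma contains_231_unless_prefix_213:
  assumes "distinct ((n - 1) # p1 # P @ n # Q)" "set ((n - 1) # p1 # P @ n # Q) = {1..n}"
    and "\<not> (P = [] \<and> p1 = n - 2)"
  shows "contains (s_123_321 ((n - 1) # p1 # P @ n # Q)) [2, 3, 1]"
proof -
  have small: "1 \<le> e \<and> e < n - 1" if e: "e \<in> set (p1 # P @ Q)" for e
  proof -
    have "e \<in> {1..n}" using e unfolding assms(2)[symmetric] by auto
    moreover have "e \<noteq> n - 1" "e \<noteq> n" using e assms(1) by auto
    ultimately show ?thesis by auto
  qed
  then have below: "\<forall>e\<in>set (p1 # P). e < n - 1" "\<forall>e\<in>set Q. e < n" "3 \<le> n"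
    by (simp, fastforce, fastforce)
  define v where "v = Min (set (p1 # P))"
  obtain out where after_n: "run ((n - 1) # p1 # P @ [n]) = ([n, v, n - 1], out)"
    using run_ascent_then_max[of "n - 1" p1 P n] assms(1) below unfolding v_def by auto
  have "v \<in> set (p1 # P)" unfolding v_def using Min_in[of "set (p1 # P)"] by simp
  with below(1) have "v \<le> n - 2" by fastforce
  moreover have "v \<noteq> n - 2"
  proof
    assume "v = n - 2"
    with below(1) assms(1) have "p1 # P = [n - 2]"
      by (intro distinct_eq_singleton_if_Min_upper) (auto simp: v_def)
    with assms(3) show False by simp
  qed
  ultimately have "v < n - 2" by simp
  have mem: "n - 2 \<in> set (((n - 1) # p1 # P @ [n]) @ Q)" using assms(2) below(3) by auto
  have dist: "distinct (((n - 1) # p1 # P @ [n]) @ Q)" using assms(1) by simp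
  have "v < n - 1" "n - 1 < n" "n - 2 < n" "n - 2 \<noteq> n - 1" using \<open>v < n - 2\<close> below(3) by auto
  from contains_231_after_n_u_a[OF after_n this(1,2) \<open>v < n - 2\<close> this(3,4) mem dist below(2)]
  show ?thesis by simp
qed

lemma s_123_321_avoids_231_prefix_cases:
  assumes "distinct x" "set x = {1..n}" "1 \<le> n" "avoids (s_123_321 x) [2, 3, 1]"
  obtains w where "x = n # w" | w where "x = (n - 1) # n # w" | w where "x = (n - 1) # (n - 2) # n # w"
proof -
  have "n \<in> set x" using assms(2,3) by auto
  then obtain P Q where x: "x = P @ n # Q" by (meson split_list)
  show thesis
  proof (cases P)
    case Nil
    with x that(1) show thesis by simp
  next
    case (Cons a P')
    have "a \<in> {1..n}" "a \<noteq> n" using assms(1,2) x Cons by auto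
    moreover have "\<not> a < n - 1"
      using contains_231_if_first_small[of a P' n Q] assms(1,2,4) x Cons by (auto simp: avoids_def)
    ultimately have a: "a = n - 1" by auto
    show thesis
    proof (cases P')
      case Nil
      with x Cons a that(2) show thesis by simp
    next
      case (Cons p1 P'')
      have "P'' = [] \<and> p1 = n - 2"
        using contains_231_unless_prefix_213[of n p1 P'' Q] assms(1,2,4) x \<open>P = a # P'\<close> Cons a
        by (auto simp: avoids_def)
      with that(3) x \<open>P = a # P'\<close> Cons a show thesis by simp
    qed
  qed
qed

section \<open>Swap invariance after the admissible prefixes\<close>

lemma perm_suffix_below:
  fixes n :: nat
  assumes "distinct (p @ w)" "set (p @ w) = {1..n}" "{m..n} \<subseteq> set p"
  shows "\<forall>e\<in>set w. e < m"
proof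
  fix e assume "e \<in> set w"
  with assms(1) have "e \<in> {1..n}" "e \<notin> set p" unfolding assms(2)[symmetric] by auto
  show "e < m"
  proof (rule ccontr)
    assume "\<not> e < m"
    with \<open>e \<in> {1..n}\<close> have "e \<in> {m..n}" by (simp add: not_less)
    with assms(3) \<open>e \<notin> set p\<close> show False by blast
  qed
qed

lemma s_123_321_swap12_after_prefix:
  fixes n :: nat
  assumes decomp: "\<And>w'. \<forall>e\<in>set w'. e < m \<Longrightarrow> distinct w' \<Longrightarrow> w' \<noteq> [] \<Longrightarrow>
      s_123_321 (p @ w') = u @ s_12_321 w' @ v"
    and perm: "distinct (p @ w)" "set (p @ w) = {1..n}"
    and prefix: "{m..n} \<subseteq> set p" "\<forall>e\<in>set p. 3 \<le> e" "3 \<le> m" "m \<le> n"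
    and avoid: "avoids (s_123_321 (p @ w)) [2, 3, 1]"
  shows "s_123_321 (p @ w) = s_123_321 (swap12 (p @ w))"
proof -
  have below: "\<forall>e\<in>set w. e < m" using perm prefix(1) by (rule perm_suffix_below)
  have "distinct w" using perm(1) by simp
  have "0 \<notin> set w" "{1, 2} \<subseteq> set w"
  proof -
    have "set w \<subseteq> {1..n}" unfolding perm(2)[symmetric] by auto
    then show "0 \<notin> set w" by auto
    have "{1, 2} \<subseteq> set (p @ w)" unfolding perm(2) using prefix(3,4) by auto
    with prefix(2) show "{1, 2} \<subseteq> set w" by auto
  qed
  then have "w \<noteq> []" by auto
  with below \<open>distinct w\<close> have s_w: "s_123_321 (p @ w) = u @ s_12_321 w @ v" by (rule decomp)
  have "subseq (s_12_321 w) (s_123_321 (p @ w))"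
    unfolding s_w by (simp add: subseq_drop_many subseq_rev_drop_many)
  with avoid have "avoids (s_12_321 w) [2, 3, 1]" unfolding avoids_def using contains_subseq by blast
  with \<open>distinct w\<close> \<open>0 \<notin> set w\<close> \<open>{1, 2} \<subseteq> set w\<close> have "s_12_321 (swap12 w) = s_12_321 w"
    by (rule s_12_321_swap12)
  moreover have "swap12 (p @ w) = p @ swap12 w" using prefix(2) by (simp add: swap12_append swap12_large)
  moreover have "s_123_321 (p @ swap12 w) = u @ s_12_321 (swap12 w) @ v"
  proof (rule decomp)
    show "\<forall>e\<in>set (swap12 w). e < m" "distinct (swap12 w)" "swap12 w \<noteq> []"
      using below \<open>distinct w\<close> \<open>w \<noteq> []\<close> \<open>{1, 2} \<subseteq> set w\<close>
      by (simp_all add: set_swap12 distinct_swap12, simp add: swap12_def)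
  qed
  ultimately show ?thesis using s_w by simp
qed

lemma s_123_321_swap12_prefix_1:
  assumes "distinct (n # w)" "set (n # w) = {1..n}" "3 \<le> n" "avoids (s_123_321 (n # w)) [2, 3, 1]"
  shows "s_123_321 (n # w) = s_123_321 (swap12 (n # w))"
proof -
  have decomp: "s_123_321 ([n] @ w') = [] @ s_12_321 w' @ [n]"
    if "\<forall>e\<in>set w'. e < n" "distinct w'" "w' \<noteq> []" for w'
    using s_123_321_prefix_1 that by simp
  from s_123_321_swap12_after_prefix[OF decomp, where m = n and w = w and n = n] assms
  show ?thesis by auto
qed

lemma s_123_321_swap12_prefix_12:
  assumes "distinct ((n - 1) # n # w)" "set ((n - 1) # n # w) = {1..n}" "4 \<le> n"
    and "avoids (s_123_321 ((n - 1) # n # w)) [2, 3, 1]"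
  shows "s_123_321 ((n - 1) # n # w) = s_123_321 (swap12 ((n - 1) # n # w))"
proof -
  have decomp: "s_123_321 ([n - 1, n] @ w') = [] @ s_12_321 w' @ [n, n - 1]"
    if "\<forall>e\<in>set w'. e < n - 1" "distinct w'" "w' \<noteq> []" for w'
    using s_123_321_prefix_12[of "n - 1" n] that assms(3) by simp
  have "{n - 1..n} \<subseteq> set [n - 1, n]" by auto
  with s_123_321_swap12_after_prefix[OF decomp, where m = "n - 1" and w = w and n = n] assms
  show ?thesis by auto
qed

lemma s_123_321_swap12_prefix_213:
  assumes "distinct ((n - 1) # (n - 2) # n # w)" "set ((n - 1) # (n - 2) # n # w) = {1..n}" "5 \<le> n"
    and "avoids (s_123_321 ((n - 1) # (n - 2) # n # w)) [2, 3, 1]"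
  shows "s_123_321 ((n - 1) # (n - 2) # n # w) = s_123_321 (swap12 ((n - 1) # (n - 2) # n # w))"
proof -
  have decomp: "s_123_321 ([n - 1, n - 2, n] @ w') = [n, n - 2] @ s_12_321 w' @ [n - 1]"
    if "\<forall>e\<in>set w'. e < n - 2" "distinct w'" "w' \<noteq> []" for w'
    using s_123_321_prefix_213[of "n - 2" "n - 1" n] that assms(3) by simp
  have "{n - 2..n} \<subseteq> set [n - 1, n - 2, n]" by auto
  with s_123_321_swap12_after_prefix[OF decomp, where m = "n - 2" and w = w and n = n] assms
  show ?thesis by auto
qed

theorem corollary4p6:
  fixes n :: nat and x :: "nat list"
  assumes "n \<ge> 5" and "x \<in> Sort_123_321 n"
  shows "s_123_321 x = s_123_321 (swap12 x)"
proof -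
  from assms(2) have perm: "distinct x" "set x = {1..n}" and west: "west_s (s_123_321 x) = [1..<n + 1]"
    unfolding Sort_123_321_def perms_def by auto
  have "sorted (west_s (s_123_321 x))" unfolding west by (rule sorted_upt)
  with perm have avoid: "avoids (s_123_321 x) [2, 3, 1]"
    using sorted_west_s_avoids_231 distinct_flush_run by (simp add: s_123_321_eq_flush_run)
  have "1 \<le> n" using assms(1) by simp
  from perm this avoid show ?thesis
  proof (cases rule: s_123_321_avoids_231_prefix_cases)
    case (1 w)
    with perm avoid assms(1) show ?thesis using s_123_321_swap12_prefix_1[of n w] by simp
  next
    case (2 w)
    with perm avoid assms(1) show ?thesis using s_123_321_swap12_prefix_12[of n w] by simp
  next
    case (3 w)
    with perm avoid assms(1) show ?thesis using s_123_321_swap12_prefix_213[of n w] by simp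
  qed
qed

end
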